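(* Let $\boldsymbol{X}_i=(X_{i1},\ldots,X_{id})$, $i\in\{1,\ldots,n\}$, be independent and identically distributed random vectors in $\mathbb{R}^d$ with continuous joint distribution function $F$. Let $(W_{n1},\ldots,W_{nn})$ be a multinomial random vector with $n$ trials and success probabilities $(1/n,\ldots,1/n)$, independent of $\boldsymbol{X}_1,\ldots,\boldsymbol{X}_n$. Define \[ \mathbb{F}_n^*(\boldsymbol{x}):=\frac{1}{n}\sum_{i=1}^n W_{ni}\prod_{j=1}^d \mathbbm{1}\{X_{ij}\le x_j\},\qquad \mathbb{F}_{nj}^*(x_j):=\frac{1}{n}\sum_{i=1}^n W_{ni}\mathbbm{1}\{X_{ij}\le x_j\},\quad j\in\{1,\ldots,d\}, \] the bootstrapped empirical copula \[ \mathbb{C}_n^*(\boldsymbol{u}):=\mathbb{F}_n^*\bigl(\mathbb{F}_{n1}^{*-}(u_1),\ldots,\mathbb{F}_{nd}^{*-}(u_d)\bigr),\qquad \boldsymbol{u}\in[0,1]^d, \] the bootstrapped ranks $R^*_{ij,n}:=\sum_{k=1}^n W_{nk}\mathbbm{1}\{X_{kj}\le X_{ij}\}$, and the bootstrapped rank-based empirical copula \[ \tilde{\mathbb{C}}_n^*(\boldsymbol{u}):=\frac{1}{n}\sum_{i=1}^n W_{ni}\prod_{j=1}^d\mathbbm{1}\Bigl\{\frac{R^*_{ij,n}}{n}\le u_j\Bigr\},\qquad \boldsymbol{u}\in[0,1]^d. \] Then \[ \sup_{\boldsymbol{u}\in[0,1]^d}\bigl\lvert \mathbb{C}_n^*(\boldsymbol{u})-\tilde{\mathbb{C}}_n^*(\boldsymbol{u})\bigr\rvert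 = O_p\bigl(n^{-1}\log n\bigr),\qquad n\to\infty. \]
   Context: For a distribution function $H$ on $\mathbb{R}$, $H^-(u)=\inf\{t\in\mathbb{R}: H(t)\ge u\}$ denotes its generalized inverse. $O_p$ denotes stochastic boundedness (in probability, jointly over the data and the multinomial weights). *)

theory Defs
  imports "HOL-Probability.Probability"
begin

text \<open>Multinomial vector with n trials and success probabilities (1/n,...,1/n),
  represented as a list of length n (entry i = number of trials landing in cell i).\<close>
definition multinomial_unif :: "nat \<Rightarrow> nat list pmf" where
  "multinomial_unif n =
     map_pmf (\<lambda>f. map (\<lambda>i. card {k\<in>{..<n}. f k = i}) [0..<n])
             (Pi_pmf {..<n} 0 (\<lambda>_. pmf_of_set {..<n}))"

text \<open>Generalized inverse H^-(u) = inf {t. H t >= u}, taken in the extended reals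
  (so that H^-(0) = -infinity).\<close>
definition geninv :: "(real \<Rightarrow> real) \<Rightarrow> real \<Rightarrow> ereal" where
  "geninv H u = Inf (ereal ` {t. u \<le> H t})"

definition boot_F :: "nat \<Rightarrow> (nat \<Rightarrow> real^'d) \<Rightarrow> nat list \<Rightarrow> ereal^'d \<Rightarrow> real" where
  "boot_F n x w y = (1 / real n) *
     (\<Sum>i<n. real (w ! i) * (\<Prod>j\<in>UNIV. if ereal (x i $ j) \<le> y $ j then 1 else 0))"

definition boot_Fj :: "nat \<Rightarrow> (nat \<Rightarrow> real^'d) \<Rightarrow> nat list \<Rightarrow> 'd \<Rightarrow> real \<Rightarrow> real" where
  "boot_Fj n x w j t = (1 / real n) *
     (\<Sum>i<n. real (w ! i) * (if x i $ j \<le> t then 1 else 0))"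

definition boot_C :: "nat \<Rightarrow> (nat \<Rightarrow> real^'d) \<Rightarrow> nat list \<Rightarrow> real^'d \<Rightarrow> real" where
  "boot_C n x w u = boot_F n x w (\<chi> j. geninv (boot_Fj n x w j) (u $ j))"

definition boot_rank :: "nat \<Rightarrow> (nat \<Rightarrow> real^'d) \<Rightarrow> nat list \<Rightarrow> nat \<Rightarrow> 'd \<Rightarrow> real" where
  "boot_rank n x w i j = (\<Sum>k<n. real (w ! k) * (if x k $ j \<le> x i $ j then 1 else 0))"

definition boot_Ctilde :: "nat \<Rightarrow> (nat \<Rightarrow> real^'d) \<Rightarrow> nat list \<Rightarrow> real^'d \<Rightarrow> real" where
  "boot_Ctilde n x w u = (1 / real n) *
     (\<Sum>i<n. real (w ! i) *
        (\<Prod>j\<in>UNIV. if boot_rank n x w i j / real n \<le> u $ j then 1 else 0))"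

definition unit_cube :: "(real^'d) set" where
  "unit_cube = {u. \<forall>j. 0 \<le> u $ j \<and> u $ j \<le> 1}"

end

theory Submission
  imports Defs
begin

(* With L_ij = F*_nj(X_ij-) and R_ij = F*_nj(X_ij) = R*_ij,n / n, the copula C*_n(u) is the
   W-weighted average of the products of the indicators of L_ij < u_j, and the rank copula the
   same with R_ij <= u_j. If coordinate j has no ties, then R_ij = L_ij + W_ni / n and the
   intervals (L_ij, R_ij) are pairwise disjoint, so for each u_j at most one observation is
   counted differently: the supremum is at most d max_i W_ni / n. Ties have probability zero
   because F is continuous, and P(W_ni >= m) <= 1/m! gives max_i W_ni = O(log n) with probability
   tending to one. *)

definition boot_Fj_left :: "nat \<Rightarrow> (nat \<Rightarrow> real^'d) \<Rightarrow> nat list \<Rightarrow> 'd \<Rightarrow> real \<Rightarrow> real" where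
  "boot_Fj_left n x w j t = (1 / real n) *
     (\<Sum>i<n. real (w ! i) * (if x i $ j < t then 1 else 0))"

lemma boot_Fj_le_boot_Fj_left:
  assumes "s < t"
  shows "boot_Fj n x w j s \<le> boot_Fj_left n x w j t"
  unfolding boot_Fj_def boot_Fj_left_def using assms by (intro mult_left_mono sum_mono) auto

lemma ereal_le_geninv_boot_Fj_iff:
  "ereal y \<le> geninv (boot_Fj n x w j) u \<longleftrightarrow> boot_Fj_left n x w j y < u"
proof -
  let ?H = "boot_Fj n x w j"
  have "ereal y \<le> geninv ?H u \<longleftrightarrow> (\<forall>t. u \<le> ?H t \<longrightarrow> y \<le> t)"
    unfolding geninv_def by (auto simp: le_Inf_iff)
  also have "\<dots> \<longleftrightarrow> boot_Fj_left n x w j y < u"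
  proof
    assume below_y: "\<forall>t. u \<le> ?H t \<longrightarrow> y \<le> t"
    define t0 where "t0 = Max (insert (y - 1) {x k $ j | k. k < n \<and> x k $ j < y})"
    have "t0 < y"
      unfolding t0_def by (subst Max_less_iff) auto
    moreover have "x k $ j \<le> t0" if "k < n" "x k $ j < y" for k
      unfolding t0_def using that by (intro Max_ge) auto
    then have "x k $ j \<le> t0 \<longleftrightarrow> x k $ j < y" if "k < n" for k
      using \<open>t0 < y\<close> that by force
    then have "?H t0 = boot_Fj_left n x w j y"
      unfolding boot_Fj_def boot_Fj_left_def by (auto intro!: sum.cong)
    ultimately show "boot_Fj_left n x w j y < u"
      using below_y by (metis leI not_le)
  next
    assume left_less: "boot_Fj_left n x w j y < u"
    show "\<forall>t. u \<le> ?H t \<longrightarrow> y \<le> t"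
    proof (intro allI impI)
      fix t
      assume "u \<le> ?H t"
      with left_less have "boot_Fj_left n x w j y < ?H t" by simp
      then show "y \<le> t"
        using boot_Fj_le_boot_Fj_left[of t y n x w j] by (meson leD not_le)
    qed
  qed
  finally show ?thesis .
qed

lemma boot_C_eq:
  "boot_C n x w u = (1 / real n) * (\<Sum>i<n. real (w ! i) *
      (\<Prod>j\<in>UNIV. if boot_Fj_left n x w j (x i $ j) < u $ j then 1 else 0))"
  unfolding boot_C_def boot_F_def by (simp add: ereal_le_geninv_boot_Fj_iff)

lemma boot_Ctilde_eq:
  "boot_Ctilde n x w u = (1 / real n) * (\<Sum>i<n. real (w ! i) *
      (\<Prod>j\<in>UNIV. if boot_Fj n x w j (x i $ j) \<le> u $ j then 1 else 0))"
  unfolding boot_Ctilde_def boot_rank_def boot_Fj_def by (simp add: sum_divide_distrib)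

lemma boot_Fj_eq_boot_Fj_left_add:
  assumes "inj_on (\<lambda>k. x k $ j) {..<n}" and "i < n"
  shows "boot_Fj n x w j (x i $ j) = boot_Fj_left n x w j (x i $ j) + real (w ! i) / real n"
proof -
  have "(\<Sum>k<n. real (w ! k) * (if x k $ j \<le> x i $ j then 1 else 0)) =
        (\<Sum>k<n. real (w ! k) * (if x k $ j < x i $ j then 1 else 0) + (if k = i then real (w ! i) else 0))"
    using assms by (intro sum.cong) (auto dest: inj_onD)
  also have "\<dots> = (\<Sum>k<n. real (w ! k) * (if x k $ j < x i $ j then 1 else 0)) + real (w ! i)"
    using assms(2) by (simp add: sum.distrib)
  finally show ?thesis
    unfolding boot_Fj_def boot_Fj_left_def by (simp add: add_divide_distrib)
qed

lemma sum_weighted_boot_indicator_diff_le: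
  assumes no_ties: "inj_on (\<lambda>k. x k $ j) {..<n}" and bounded: "\<And>i. i < n \<Longrightarrow> w ! i \<le> m"
  shows "(\<Sum>i<n. real (w ! i) *
            \<bar>(if boot_Fj_left n x w j (x i $ j) < t then 1 else 0)
             - (if boot_Fj n x w j (x i $ j) \<le> t then 1 else 0)\<bar>) \<le> real m"
proof -
  define L where "L i = boot_Fj_left n x w j (x i $ j)" for i
  define F where "F i = boot_Fj n x w j (x i $ j)" for i
  define S where "S = {i \<in> {..<n}. L i < t \<and> t < F i}"
  have term_le: "real (w ! i) * \<bar>(if L i < t then 1 else 0) - (if F i \<le> t then 1 else 0)\<bar>
      \<le> (if i \<in> S then real (w ! i) else 0)" if "i < n" for i
  proof (cases "w ! i = 0")
    case False
    have "F i = L i + real (w ! i) / real n"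
      unfolding F_def L_def using no_ties that by (rule boot_Fj_eq_boot_Fj_left_add)
    moreover have "0 < real (w ! i) / real n"
      using False that by simp
    ultimately have "\<bar>(if L i < t then 1 else 0) - (if F i \<le> t then 1 else 0)\<bar>
        = (if i \<in> S then 1 else 0 :: real)"
      unfolding S_def using that by auto
    then show ?thesis
      by simp
  qed simp
  have separated: "k \<notin> S" if "i \<in> S" "x i $ j < x k $ j" for i k
  proof -
    have "F i \<le> L k"
      unfolding F_def L_def using that(2) by (rule boot_Fj_le_boot_Fj_left)
    with that(1) show ?thesis
      unfolding S_def by simp
  qed
  have "i = k" if "i \<in> S" "k \<in> S" for i k
  proof (rule ccontr)
    assume "i \<noteq> k"
    with that have "x i $ j \<noteq> x k $ j"
      using inj_onD[OF no_ties] unfolding S_def by blast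
    then show False
      using separated[of i k] separated[of k i] that by linarith
  qed
  then have "card S \<le> 1"
    by (simp add: card_le_Suc0_iff_eq S_def)
  have "S \<subseteq> {..<n}"
    unfolding S_def by blast
  have "(\<Sum>i<n. real (w ! i) * \<bar>(if L i < t then 1 else 0) - (if F i \<le> t then 1 else 0)\<bar>)
      \<le> (\<Sum>i<n. if i \<in> S then real (w ! i) else 0)"
    by (intro sum_mono term_le) simp
  also have "\<dots> = (\<Sum>i\<in>S. real (w ! i))"
    using sum.inter_restrict[of "{..<n}" "\<lambda>i. real (w ! i)" S] \<open>S \<subseteq> {..<n}\<close>
    by (simp add: Int_absorb1)
  also have "\<dots> \<le> real (card S) * real m"
    using bounded unfolding S_def by (intro sum_bounded_above) auto
  also have "\<dots> \<le> real m"
    using \<open>card S \<le> 1\<close> by (intro mult_left_le_one_le) auto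
  finally show ?thesis
    unfolding F_def L_def .
qed

lemma abs_boot_C_diff_le:
  fixes x :: "nat \<Rightarrow> real^'d::finite"
  assumes "\<And>j. inj_on (\<lambda>k. x k $ j) {..<n}" and "\<And>i. i < n \<Longrightarrow> w ! i \<le> m"
  shows "\<bar>boot_C n x w u - boot_Ctilde n x w u\<bar> \<le> real CARD('d) * real m / real n"
proof -
  define a where "a i j = (if boot_Fj_left n x w j (x i $ j) < u $ j then 1 else 0 :: real)" for i j
  define b where "b i j = (if boot_Fj n x w j (x i $ j) \<le> u $ j then 1 else 0 :: real)" for i j
  have prod_diff_le: "\<bar>prod (a i) UNIV - prod (b i) UNIV\<bar> \<le> (\<Sum>j\<in>UNIV. \<bar>a i j - b i j\<bar>)" for i
    by (rule norm_prod_diff[where 'a=real, unfolded real_norm_def]) (simp_all add: a_def b_def)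
  have "boot_C n x w u - boot_Ctilde n x w u
      = (1 / real n) * (\<Sum>i<n. real (w ! i) * (prod (a i) UNIV - prod (b i) UNIV))"
    unfolding boot_C_eq boot_Ctilde_eq a_def b_def by (simp add: sum_subtractf right_diff_distrib)
  then have "\<bar>boot_C n x w u - boot_Ctilde n x w u\<bar>
      = (1 / real n) * \<bar>\<Sum>i<n. real (w ! i) * (prod (a i) UNIV - prod (b i) UNIV)\<bar>"
    by (simp add: abs_mult)
  also have "\<dots> \<le> (1 / real n) * (\<Sum>i<n. real (w ! i) * (\<Sum>j\<in>UNIV. \<bar>a i j - b i j\<bar>))"
    by (intro mult_left_mono order.trans[OF sum_abs] sum_mono) (auto simp: abs_mult intro: mult_left_mono prod_diff_le)
  also have "\<dots> = (1 / real n) * (\<Sum>j\<in>UNIV. \<Sum>i<n. real (w ! i) * \<bar>a i j - b i j\<bar>)"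
    by (simp add: sum_distrib_left sum.swap[of _ "{..<n}"])
  also have "\<dots> \<le> (1 / real n) * (\<Sum>j\<in>(UNIV :: 'd set). real m)"
    unfolding a_def b_def using assms
    by (intro mult_left_mono sum_mono sum_weighted_boot_indicator_diff_le) auto
  finally show ?thesis
    by simp
qed

definition boot_copula_dist :: "nat \<Rightarrow> (nat \<Rightarrow> real^'d) \<Rightarrow> nat list \<Rightarrow> real" where
  "boot_copula_dist n x w = (SUP u\<in>unit_cube. \<bar>boot_C n x w u - boot_Ctilde n x w u\<bar>)"

lemma zero_in_unit_cube: "0 \<in> unit_cube"
  by (simp add: unit_cube_def)

lemma boot_copula_dist_le:
  fixes x :: "nat \<Rightarrow> real^'d::finite"
  assumes "\<And>j. inj_on (\<lambda>k. x k $ j) {..<n}" and "\<And>i. i < n \<Longrightarrow> w ! i \<le> m"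
  shows "boot_copula_dist n x w \<le> real CARD('d) * real m / real n"
  unfolding boot_copula_dist_def using assms zero_in_unit_cube
  by (intro cSUP_least abs_boot_C_diff_le) auto

lemma exists_midpoint_same_order:
  fixes A :: "real set"
  assumes "finite A" and "lo \<in> A" "hi \<in> A" and "lo \<le> t" "t \<le> hi"
  shows "\<exists>a\<in>A. \<exists>b\<in>A. lo \<le> (a + b) / 2 \<and> (a + b) / 2 \<le> hi \<and>
           (\<forall>z\<in>A. (z < t \<longleftrightarrow> z < (a + b) / 2) \<and> (z \<le> t \<longleftrightarrow> z \<le> (a + b) / 2))"
proof (cases "t \<in> A")
  case True
  then show ?thesis
    using assms by (intro bexI[of _ t]) auto
next
  case False
  define a where "a = Max {z \<in> A. z < t}"
  define b where "b = Min {z \<in> A. t < z}"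
  have "lo < t" "t < hi"
    using False assms by (auto simp: order.order_iff_strict)
  have "a \<in> {z \<in> A. z < t}" "b \<in> {z \<in> A. t < z}"
    unfolding a_def b_def using assms \<open>lo < t\<close> \<open>t < hi\<close> by (intro Max_in Min_in; auto)+
  moreover have "lo \<le> a" "\<And>z. z \<in> A \<Longrightarrow> z < t \<Longrightarrow> z \<le> a"
    and "b \<le> hi" "\<And>z. z \<in> A \<Longrightarrow> t < z \<Longrightarrow> b \<le> z"
    unfolding a_def b_def using assms \<open>lo < t\<close> \<open>t < hi\<close> by (auto intro: Max_ge Min_le)
  ultimately have below: "a \<in> A" "a < t" "lo \<le> a" "\<And>z. z \<in> A \<Longrightarrow> z < t \<Longrightarrow> z \<le> a"
    and above: "b \<in> A" "t < b" "b \<le> hi" "\<And>z. z \<in> A \<Longrightarrow> t < z \<Longrightarrow> b \<le> z"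
    by auto
  have "(z < t \<longleftrightarrow> z < (a + b) / 2) \<and> (z \<le> t \<longleftrightarrow> z \<le> (a + b) / 2)" if "z \<in> A" for z
    using below(2) above(2) below(4)[of z] above(4)[of z] \<open>t \<notin> A\<close> that by (cases z t rule: linorder_cases) auto
  then show ?thesis
    using below above by (intro bexI[of _ a] bexI[of _ b]) auto
qed

(* boot_C and boot_Ctilde depend on u only through the comparisons of each u_j with these knots
   (0, 1, the left limits and the values of boot_Fj at the sample points), so the midpoints of pairs
   of knots realise every value of the difference on the unit cube and the supremum is a maximum
   over finitely many points. *)
definition boot_knot :: "nat \<Rightarrow> (nat \<Rightarrow> real^'d) \<Rightarrow> nat list \<Rightarrow> 'd \<Rightarrow> nat \<Rightarrow> real" where
  "boot_knot n x w j p =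
     (if p = 0 then 0 else if p = 1 then 1
      else if p < n + 2 then boot_Fj_left n x w j (x (p - 2) $ j)
      else boot_Fj n x w j (x (p - n - 2) $ j))"

definition boot_grid_index :: "nat \<Rightarrow> ('d \<Rightarrow> nat \<times> nat) set" where
  "boot_grid_index n = UNIV \<rightarrow>\<^sub>E {..<2*n+2} \<times> {..<2*n+2}"

lemma finite_boot_grid_index: "finite (boot_grid_index n :: ('d::finite \<Rightarrow> nat \<times> nat) set)"
  unfolding boot_grid_index_def by (intro finite_PiE) auto

definition boot_knot_mid :: "nat \<Rightarrow> (nat \<Rightarrow> real^'d) \<Rightarrow> nat list \<Rightarrow> 'd \<Rightarrow> nat \<times> nat \<Rightarrow> real" where
  "boot_knot_mid n x w j pq = (boot_knot n x w j (fst pq) + boot_knot n x w j (snd pq)) / 2"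

definition boot_grid_point ::
    "nat \<Rightarrow> (nat \<Rightarrow> real^'d) \<Rightarrow> nat list \<Rightarrow> ('d \<Rightarrow> nat \<times> nat) \<Rightarrow> real^'d" where
  "boot_grid_point n x w k = (\<chi> j. boot_knot_mid n x w j (k j))"

lemma exists_boot_knot_mid_same_order:
  assumes "0 \<le> t" "t \<le> 1"
  shows "\<exists>pq \<in> {..<2*n+2} \<times> {..<2*n+2}.
           0 \<le> boot_knot_mid n x w j pq \<and> boot_knot_mid n x w j pq \<le> 1 \<and>
           (\<forall>z \<in> boot_knot n x w j ` {..<2*n+2}.
              (z < t \<longleftrightarrow> z < boot_knot_mid n x w j pq) \<and> (z \<le> t \<longleftrightarrow> z \<le> boot_knot_mid n x w j pq))"
proof -
  let ?A = "boot_knot n x w j ` {..<2*n+2}"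
  have "0 \<in> ?A" "1 \<in> ?A"
    by (force simp: boot_knot_def)+
  then obtain a b where "a \<in> ?A" "b \<in> ?A" "0 \<le> (a + b) / 2" "(a + b) / 2 \<le> 1"
      "\<forall>z\<in>?A. (z < t \<longleftrightarrow> z < (a + b) / 2) \<and> (z \<le> t \<longleftrightarrow> z \<le> (a + b) / 2)"
    using exists_midpoint_same_order[of ?A 0 1 t] assms by blast
  then show ?thesis
    unfolding boot_knot_mid_def by (auto intro!: bexI[of _ "(_, _)"])
qed

lemma obtain_boot_grid_point:
  assumes "u \<in> unit_cube"
  obtains k where "k \<in> boot_grid_index n" "boot_grid_point n x w k \<in> unit_cube"
    "boot_C n x w (boot_grid_point n x w k) = boot_C n x w u"
    "boot_Ctilde n x w (boot_grid_point n x w k) = boot_Ctilde n x w u"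
proof -
  have "\<forall>j. \<exists>pq. pq \<in> {..<2*n+2} \<times> {..<2*n+2} \<and>
           0 \<le> boot_knot_mid n x w j pq \<and> boot_knot_mid n x w j pq \<le> 1 \<and>
           (\<forall>z \<in> boot_knot n x w j ` {..<2*n+2}.
              (z < u $ j \<longleftrightarrow> z < boot_knot_mid n x w j pq) \<and> (z \<le> u $ j \<longleftrightarrow> z \<le> boot_knot_mid n x w j pq))"
    using exists_boot_knot_mid_same_order assms unfolding unit_cube_def Bex_def by blast
  from choice[OF this] obtain k where k: "\<forall>j. k j \<in> {..<2*n+2} \<times> {..<2*n+2} \<and>
      0 \<le> boot_grid_point n x w k $ j \<and> boot_grid_point n x w k $ j \<le> 1 \<and>
      (\<forall>z \<in> boot_knot n x w j ` {..<2*n+2}.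
         (z < u $ j \<longleftrightarrow> z < boot_grid_point n x w k $ j) \<and> (z \<le> u $ j \<longleftrightarrow> z \<le> boot_grid_point n x w k $ j))"
    unfolding boot_grid_point_def by auto
  have "boot_Fj_left n x w j (x i $ j) \<in> boot_knot n x w j ` {..<2*n+2}" if "i < n" for i j
    using that by (intro image_eqI[of _ _ "i + 2"]) (auto simp: boot_knot_def)
  then have "boot_Fj_left n x w j (x i $ j) < boot_grid_point n x w k $ j
      \<longleftrightarrow> boot_Fj_left n x w j (x i $ j) < u $ j" if "i < n" for i j
    using k that by blast
  then have "boot_C n x w (boot_grid_point n x w k) = boot_C n x w u"
    unfolding boot_C_eq by simp
  moreover have "boot_Fj n x w j (x i $ j) \<in> boot_knot n x w j ` {..<2*n+2}" if "i < n" for i j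
    using that by (intro image_eqI[of _ _ "i + n + 2"]) (auto simp: boot_knot_def)
  then have "boot_Fj n x w j (x i $ j) \<le> boot_grid_point n x w k $ j
      \<longleftrightarrow> boot_Fj n x w j (x i $ j) \<le> u $ j" if "i < n" for i j
    using k that by blast
  then have "boot_Ctilde n x w (boot_grid_point n x w k) = boot_Ctilde n x w u"
    unfolding boot_Ctilde_eq by simp
  moreover have "boot_grid_point n x w k \<in> unit_cube" "k \<in> boot_grid_index n"
    using k by (simp_all add: unit_cube_def boot_grid_index_def PiE_UNIV_domain)
  ultimately show ?thesis
    using that by blast
qed

lemma boot_copula_dist_eq_Max:
  fixes x :: "nat \<Rightarrow> real^'d::finite"
  shows "boot_copula_dist n x w =
     Max ((\<lambda>k. let v = boot_grid_point n x w k in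
                if v \<in> unit_cube then \<bar>boot_C n x w v - boot_Ctilde n x w v\<bar> else 0)
          ` boot_grid_index n)"
proof -
  define D where "D u = \<bar>boot_C n x w u - boot_Ctilde n x w u\<bar>" for u :: "real^'d"
  define g where "g k = (let v = boot_grid_point n x w k in if v \<in> unit_cube then D v else 0)" for k
  define K where "K = (boot_grid_index n :: ('d \<Rightarrow> nat \<times> nat) set)"
  have fin: "finite (g ` K)"
    unfolding K_def using finite_boot_grid_index by blast
  have ne: "g ` K \<noteq> {}"
    unfolding K_def boot_grid_index_def by (auto simp: PiE_eq_empty_iff)
  have attained: "D ` unit_cube \<subseteq> g ` K"
  proof (rule image_subsetI)
    fix u :: "real^'d"
    assume "u \<in> unit_cube"
    then obtain k where "k \<in> K" "boot_grid_point n x w k \<in> unit_cube"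
        "D (boot_grid_point n x w k) = D u"
      unfolding D_def K_def by (rule obtain_boot_grid_point[of u n x w]) simp_all
    then show "D u \<in> g ` K"
      by (intro rev_image_eqI[OF \<open>k \<in> K\<close>]) (simp add: g_def)
  qed
  then have bdd: "bdd_above (D ` unit_cube)"
    by (rule bdd_above_mono[OF bdd_above_finite[OF fin]])
  have "(SUP u\<in>unit_cube. D u) = Max (g ` K)"
  proof (rule antisym)
    show "(SUP u\<in>unit_cube. D u) \<le> Max (g ` K)"
      using attained fin zero_in_unit_cube by (intro cSUP_least) auto
    have "0 \<le> (SUP u\<in>unit_cube. D u)"
      using cSUP_upper[OF zero_in_unit_cube bdd] abs_ge_zero[of "boot_C n x w 0 - boot_Ctilde n x w 0"]
      unfolding D_def by linarith
    then show "Max (g ` K) \<le> (SUP u\<in>unit_cube. D u)"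
      using cSUP_upper[OF _ bdd] by (intro Max.boundedI[OF fin ne]) (auto simp: g_def Let_def)
  qed
  then show ?thesis
    unfolding boot_copula_dist_def D_def g_def K_def .
qed

lemma borel_measurable_boot_copula_dist:
  fixes X :: "nat \<Rightarrow> 'w \<Rightarrow> real^'d::finite"
  assumes X: "\<And>i. X i \<in> borel_measurable M" and W: "W \<in> measurable M (count_space UNIV)"
  shows "(\<lambda>\<omega>. boot_copula_dist n (\<lambda>i. X i \<omega>) (W \<omega>)) \<in> borel_measurable M"
proof -
  note W[measurable]
  have [measurable]: "(\<lambda>\<omega>. X i \<omega> $ j) \<in> borel_measurable M" for i j
    by (rule measurable_compose[OF X borel_measurable_nth])
  have [measurable]: "(\<lambda>\<omega>. real (W \<omega> ! i)) \<in> borel_measurable M" for i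
    by measurable
  let ?v = "\<lambda>k \<omega>. boot_grid_point n (\<lambda>i. X i \<omega>) (W \<omega>) k"
  have [measurable]: "(\<lambda>\<omega>. ?v k \<omega> $ j) \<in> borel_measurable M" for k j
    unfolding boot_grid_point_def boot_knot_mid_def boot_knot_def boot_Fj_left_def boot_Fj_def
    by simp measurable
  have [measurable]: "Measurable.pred M (\<lambda>\<omega>. ?v k \<omega> \<in> unit_cube)" for k
    unfolding unit_cube_def mem_Collect_eq by measurable
  have [measurable]: "(\<lambda>\<omega>. boot_C n (\<lambda>i. X i \<omega>) (W \<omega>) (?v k \<omega>)) \<in> borel_measurable M" for k
    unfolding boot_C_eq boot_Fj_left_def by measurable
  have [measurable]: "(\<lambda>\<omega>. boot_Ctilde n (\<lambda>i. X i \<omega>) (W \<omega>) (?v k \<omega>)) \<in> borel_measurable M" for k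
    unfolding boot_Ctilde_eq boot_Fj_def by measurable
  let ?D = "\<lambda>k \<omega>. let v = ?v k \<omega> in
      if v \<in> unit_cube then \<bar>boot_C n (\<lambda>i. X i \<omega>) (W \<omega>) v - boot_Ctilde n (\<lambda>i. X i \<omega>) (W \<omega>) v\<bar> else 0"
  have "?D k \<in> borel_measurable M" for k
    unfolding Let_def by measurable
  then show ?thesis
    unfolding boot_copula_dist_eq_Max by (intro borel_measurable_Max[OF finite_boot_grid_index, where f = ?D])
qed

lemma (in prob_space) coordinate_eq_null_sets:
  fixes Y :: "'a \<Rightarrow> real^'d::finite"
  assumes Y: "Y \<in> borel_measurable M"
    and F_cont: "continuous_on UNIV (\<lambda>y. prob {\<omega>\<in>space M. \<forall>i. Y \<omega> $ i \<le> y $ i})"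
  shows "{\<omega>\<in>space M. Y \<omega> $ j = t} \<in> null_sets M"
proof -
  define F where "F y = prob {\<omega>\<in>space M. \<forall>i. Y \<omega> $ i \<le> y $ i}" for y :: "real^'d"
  define corner where "corner K s = (\<chi> i. if i = j then s else real K)" for K :: nat and s
  define A where "A K = {\<omega>\<in>space M. \<forall>i. Y \<omega> $ i \<le> corner K t $ i} - {\<omega>\<in>space M. Y \<omega> $ j < t}"
    for K
  have [measurable]: "(\<lambda>\<omega>. Y \<omega> $ i) \<in> borel_measurable M" for i
    by (rule measurable_compose[OF Y borel_measurable_nth])
  have A_le: "prob (A K) \<le> F (corner K t) - F (corner K (t - 1 / Suc k))" for K k
  proof -
    define S where "S y = {\<omega>\<in>space M. \<forall>i. Y \<omega> $ i \<le> y $ i}" for y :: "real^'d"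
    have [measurable]: "S y \<in> events" for y
      unfolding S_def by measurable
    have corner_le: "corner K (t - 1 / Suc k) $ i \<le> corner K t $ i" for i
      unfolding corner_def by simp
    have "S (corner K (t - 1 / Suc k)) \<subseteq> S (corner K t)"
      unfolding S_def by (auto intro: order.trans[OF _ corner_le])
    moreover have "A K \<subseteq> S (corner K t) - S (corner K (t - 1 / Suc k))"
      unfolding A_def S_def corner_def by (auto simp: not_le[symmetric])
    then have "prob (A K) \<le> prob (S (corner K t) - S (corner K (t - 1 / Suc k)))"
      by (intro finite_measure_mono) auto
    ultimately show ?thesis
      unfolding F_def S_def[symmetric] by (simp add: finite_measure_Diff)
  qed
  have "(\<lambda>k. t - 1 / real (Suc k)) \<longlonglongrightarrow> t"
    using tendsto_diff[OF tendsto_const LIMSEQ_Suc[OF lim_1_over_n], of t] by simp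
  then have "(\<lambda>k. corner K (t - 1 / Suc k)) \<longlonglongrightarrow> corner K t" for K
    unfolding corner_def by (intro tendsto_vec_lambda) auto
  then have gap_lim: "(\<lambda>k. F (corner K t) - F (corner K (t - 1 / Suc k))) \<longlonglongrightarrow> 0" for K
    using continuous_on_tendsto_compose[OF F_cont[folded F_def]] by (auto intro!: tendsto_eq_intros)
  then have "prob (A K) \<le> 0" for K
    using A_le by (intro LIMSEQ_le_const[OF gap_lim]) auto
  then have "A K \<in> null_sets M" for K
    unfolding A_def by (intro null_setsI) (auto simp: emeasure_eq_measure measure_le_0_iff)
  then have null: "(\<Union>K. A K) \<in> null_sets M"
    by blast
  have cover: "{\<omega>\<in>space M. Y \<omega> $ j = t} \<subseteq> (\<Union>K. A K)"
  proof
    fix \<omega>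
    assume \<omega>: "\<omega> \<in> {\<omega>\<in>space M. Y \<omega> $ j = t}"
    obtain K :: nat where "norm (Y \<omega>) \<le> real K"
      using real_arch_simple by blast
    then have "Y \<omega> $ i \<le> real K" for i
      using component_le_norm_cart[of "Y \<omega>" i] by linarith
    with \<omega> show "\<omega> \<in> (\<Union>K. A K)"
      unfolding A_def corner_def by auto
  qed
  show ?thesis
    by (rule null_sets_subset[OF null _ cover]) measurable
qed

lemma (in prob_space) indep_var_eq_null_sets:
  fixes Y Z :: "'a \<Rightarrow> real"
  assumes indep: "indep_var borel Y borel Z"
    and atomless: "\<And>a. {\<omega>\<in>space M. Z \<omega> = a} \<in> null_sets M"
  shows "{\<omega>\<in>space M. Y \<omega> = Z \<omega>} \<in> null_sets M"
proof -
  have [measurable]: "Y \<in> borel_measurable M" "Z \<in> borel_measurable M"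
    using indep unfolding indep_var_distribution_eq by auto
  interpret Z: prob_space "distr M borel Z"
    by (rule prob_space_distr) simp
  define D where "D = {p \<in> space (borel \<Otimes>\<^sub>M borel). fst p = (snd p :: real)}"
  have D_sets[measurable]: "D \<in> sets (borel \<Otimes>\<^sub>M borel)"
    unfolding D_def by measurable
  have "{\<omega>\<in>space M. Y \<omega> = Z \<omega>} = (\<lambda>\<omega>. (Y \<omega>, Z \<omega>)) -` D \<inter> space M"
    by (auto simp: D_def space_pair_measure)
  then have "emeasure M {\<omega>\<in>space M. Y \<omega> = Z \<omega>}
      = emeasure (distr M (borel \<Otimes>\<^sub>M borel) (\<lambda>\<omega>. (Y \<omega>, Z \<omega>))) D"
    by (simp add: emeasure_distr)
  also have "\<dots> = emeasure (distr M borel Y \<Otimes>\<^sub>M distr M borel Z) D"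
    using indep unfolding indep_var_distribution_eq by simp
  also have "\<dots> = (\<integral>\<^sup>+a. emeasure (distr M borel Z) (Pair a -` D) \<partial>distr M borel Y)"
  proof (rule Z.emeasure_pair_measure_alt)
    have "sets (distr M borel Y \<Otimes>\<^sub>M distr M borel Z) = sets (borel \<Otimes>\<^sub>M borel)"
      by (intro sets_pair_measure_cong) auto
    then show "D \<in> sets (distr M borel Y \<Otimes>\<^sub>M distr M borel Z)"
      using D_sets by simp
  qed
  also have "\<dots> = (\<integral>\<^sup>+a. 0 \<partial>distr M borel Y)"
  proof (rule nn_integral_cong)
    fix a :: real
    have "Pair a -` D = {a}"
      by (auto simp: D_def space_pair_measure)
    then have "emeasure (distr M borel Z) (Pair a -` D) = emeasure M {\<omega>\<in>space M. Z \<omega> = a}"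
      by (subst emeasure_distr) (auto intro!: arg_cong[where f = "emeasure M"])
    then show "emeasure (distr M borel Z) (Pair a -` D) = 0"
      using atomless[of a] by (simp add: null_sets_def)
  qed
  finally show ?thesis
    by (intro null_setsI) auto
qed

lemma (in prob_space) ties_null_sets:
  fixes X :: "nat \<Rightarrow> 'a \<Rightarrow> real^'d::finite"
  assumes X_meas: "\<And>i. X i \<in> borel_measurable M"
    and X_indep: "indep_vars (\<lambda>_. borel) X UNIV"
    and X_ident: "\<And>i. distr M borel (X i) = distr M borel (X 0)"
    and F_cont: "continuous_on UNIV (\<lambda>y. prob {\<omega>\<in>space M. \<forall>j. X 0 \<omega> $ j \<le> y $ j})"
    and "i \<noteq> k"
  shows "{\<omega>\<in>space M. X i \<omega> $ j = X k \<omega> $ j} \<in> null_sets M"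
proof (rule indep_var_eq_null_sets)
  have restricted: "indep_var (PiM {i} (\<lambda>_. borel)) (\<lambda>\<omega>. restrict (\<lambda>l. X l \<omega>) {i})
                  (PiM {k} (\<lambda>_. borel)) (\<lambda>\<omega>. restrict (\<lambda>l. X l \<omega>) {k})"
    using \<open>i \<noteq> k\<close> by (intro indep_var_restrict[OF X_indep]) auto
  have proj: "(\<lambda>f :: nat \<Rightarrow> real^'d. f l $ j) \<in> borel_measurable (PiM {l} (\<lambda>_. borel))" for l
    using measurable_compose[OF measurable_component_singleton[of l "{l}" "\<lambda>_. borel"] borel_measurable_nth]
    by simp
  show "indep_var borel (\<lambda>\<omega>. X i \<omega> $ j) borel (\<lambda>\<omega>. X k \<omega> $ j)"
    using indep_var_compose[OF restricted proj proj] by (simp add: comp_def)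
next
  fix a
  have coord_sets: "{v :: real^'d. v $ j = a} \<in> sets borel"
    by measurable
  have "emeasure M {\<omega>\<in>space M. X k \<omega> $ j = a} = emeasure (distr M borel (X k)) {v. v $ j = a}"
    using coord_sets X_meas by (subst emeasure_distr) (auto intro!: arg_cong[where f = "emeasure M"])
  also have "\<dots> = emeasure (distr M borel (X 0)) {v. v $ j = a}"
    by (simp add: X_ident[of k])
  also have "\<dots> = emeasure M {\<omega>\<in>space M. X 0 \<omega> $ j = a}"
    using coord_sets X_meas by (subst emeasure_distr) (auto intro!: arg_cong[where f = "emeasure M"])
  also have "\<dots> = 0"
    using coordinate_eq_null_sets[OF X_meas F_cont] by (simp add: null_sets_def)
  finally show "{\<omega>\<in>space M. X k \<omega> $ j = a} \<in> null_sets M"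
    using X_meas by (intro null_setsI) measurable
qed

lemma prob_multinomial_unif_ge_binomial:
  assumes "i < n"
  shows "measure_pmf.prob (multinomial_unif n) {w. m \<le> w ! i} \<le> real (n choose m) / real n ^ m"
proof -
  let ?P = "Pi_pmf {..<n} 0 (\<lambda>_. pmf_of_set {..<n})"
  define B where "B S = Pi {..<n} (\<lambda>k. if k \<in> S then {i} else UNIV)" for S :: "nat set"
  define Ss where "Ss = {S. S \<subseteq> {..<n} \<and> card S = m}"
  have "finite Ss"
    unfolding Ss_def by (rule finite_subset[of _ "Pow {..<n}"]) auto
  have "measure_pmf.prob (multinomial_unif n) {w. m \<le> w ! i}
      = measure_pmf.prob ?P {f. m \<le> card {k\<in>{..<n}. f k = i}}"
    unfolding multinomial_unif_def using assms by (simp add: vimage_def)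
  also have "\<dots> \<le> measure_pmf.prob ?P (\<Union>S\<in>Ss. B S)"
  proof (rule measure_pmf.finite_measure_mono)
    show "{f. m \<le> card {k\<in>{..<n}. f k = i}} \<subseteq> (\<Union>S\<in>Ss. B S)"
    proof
      fix f
      assume "f \<in> {f. m \<le> card {k\<in>{..<n}. f k = i}}"
      then obtain S where "S \<subseteq> {k\<in>{..<n}. f k = i}" "card S = m"
        by (auto elim: obtain_subset_with_card_n)
      then show "f \<in> (\<Union>S\<in>Ss. B S)"
        unfolding Ss_def B_def by (intro UN_I[of S]) auto
    qed
  qed simp
  also have "\<dots> \<le> (\<Sum>S\<in>Ss. measure_pmf.prob ?P (B S))"
    by (rule measure_pmf.finite_measure_subadditive_finite[OF \<open>finite Ss\<close>]) simp
  also have "\<dots> = (\<Sum>S\<in>Ss. (1 / real n) ^ m)"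
  proof (rule sum.cong[OF refl])
    fix S
    assume "S \<in> Ss"
    have "measure_pmf.prob ?P (B S)
        = (\<Prod>k\<in>{..<n}. measure_pmf.prob (pmf_of_set {..<n}) (if k \<in> S then {i} else UNIV))"
      unfolding B_def by (rule measure_Pi_pmf_Pi) simp
    also have "\<dots> = (\<Prod>k\<in>{..<n}. if k \<in> S then 1 / real n else 1)"
    proof (intro prod.cong refl)
      have "measure_pmf.prob (pmf_of_set {..<n}) {i} = 1 / real n"
        using assms by (subst measure_pmf_of_set) auto
      then show "measure_pmf.prob (pmf_of_set {..<n}) (if k \<in> S then {i} else UNIV)
          = (if k \<in> S then 1 / real n else 1)" for k
        by simp
    qed
    also have "\<dots> = (1 / real n) ^ m"
      using \<open>S \<in> Ss\<close> unfolding Ss_def by (simp add: prod.If_cases Int_absorb1)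
    finally show "measure_pmf.prob ?P (B S) = (1 / real n) ^ m" .
  qed
  also have "\<dots> = real (n choose m) / real n ^ m"
    unfolding Ss_def using n_subsets[of "{..<n}" m] by (simp add: power_divide)
  finally show ?thesis .
qed

lemma prob_multinomial_unif_ge:
  assumes "i < n"
  shows "measure_pmf.prob (multinomial_unif n) {w. m \<le> w ! i} \<le> 1 / fact m"
proof -
  have "real (n choose m) * fact m \<le> real n ^ m"
    using binomial_fact_pow[of n m] by (metis of_nat_fact of_nat_le_iff of_nat_mult of_nat_power)
  then have "real (n choose m) / real n ^ m \<le> 1 / fact m"
    using assms by (simp add: field_simps)
  then show ?thesis
    using prob_multinomial_unif_ge_binomial[OF assms, of m] by linarith
qed

lemma two_pow_le_fact_Suc: "(2::nat) ^ m \<le> fact (Suc m)"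
proof (induction m)
  case (Suc m)
  have "(2::nat) ^ Suc m = 2 * 2 ^ m"
    by simp
  also have "\<dots> \<le> Suc (Suc m) * fact (Suc m)"
    using Suc.IH by (intro mult_mono) auto
  also have "\<dots> = fact (Suc (Suc m))"
    by (simp only: fact_Suc[of "Suc m"] of_nat_id)
  finally show ?case .
qed simp

lemma prob_multinomial_unif_max_gt:
  "measure_pmf.prob (multinomial_unif n) {w. \<exists>i<n. m < w ! i} \<le> real n / 2 ^ m"
proof -
  have "measure_pmf.prob (multinomial_unif n) {w. \<exists>i<n. m < w ! i}
      = measure_pmf.prob (multinomial_unif n) (\<Union>i<n. {w. Suc m \<le> w ! i})"
    by (intro arg_cong[where f = "measure_pmf.prob _"]) auto
  also have "\<dots> \<le> (\<Sum>i<n. measure_pmf.prob (multinomial_unif n) {w. Suc m \<le> w ! i})"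
    by (rule measure_pmf.finite_measure_subadditive_finite) auto
  also have "\<dots> \<le> (\<Sum>i<n. 1 / 2 ^ m)"
  proof (rule sum_mono)
    fix i
    assume "i \<in> {..<n}"
    then have "measure_pmf.prob (multinomial_unif n) {w. Suc m \<le> w ! i} \<le> 1 / fact (Suc m)"
      by (intro prob_multinomial_unif_ge) simp
    also have "\<dots> \<le> 1 / 2 ^ m"
      using of_nat_mono[OF two_pow_le_fact_Suc[of m], where 'a = real]
      by (intro divide_left_mono) (simp_all del: fact_Suc)
    finally show "measure_pmf.prob (multinomial_unif n) {w. Suc m \<le> w ! i} \<le> 1 / 2 ^ m" .
  qed
  finally show ?thesis
    by simp
qed

lemma obtain_log_weight_bound:
  assumes "2 \<le> n"
  obtains m :: nat where "real m \<le> 4 * log 2 (real n)" and "real n / 2 ^ m \<le> 1 / real n"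
proof
  define k where "k = nat \<lceil>2 * log 2 (real n)\<rceil>"
  have log_ge_1: "1 \<le> log 2 (real n)"
    using assms by (simp add: le_log_iff)
  have "real k \<le> 2 * log 2 (real n) + 1"
    unfolding k_def using log_ge_1 of_int_ceiling_le_add_one[of "2 * log 2 (real n)"] by simp
  then show "real (k + 1) \<le> 4 * log 2 (real n)"
    using log_ge_1 by simp
  have "log 2 (real n ^ 2) \<le> real k"
    unfolding k_def using real_nat_ceiling_ge[of "2 * log 2 (real n)"] by (simp add: log_nat_power)
  have "real n ^ 2 = 2 powr log 2 (real n ^ 2)"
    using assms by simp
  also have "\<dots> \<le> 2 powr real k"
    by (rule powr_mono) (fact, simp)
  also have "\<dots> = 2 ^ k"
    by (simp add: powr_realpow)
  also have "\<dots> \<le> 2 ^ (k + 1)"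
    by simp
  finally show "real n / 2 ^ (k + 1) \<le> 1 / real n"
    using assms by (simp add: field_simps power2_eq_square)
qed

lemma (in prob_space) prob_boot_copula_dist_gt:
  fixes X :: "nat \<Rightarrow> 'a \<Rightarrow> real^'d::finite" and W :: "'a \<Rightarrow> nat list"
  assumes X_meas: "\<And>i. X i \<in> borel_measurable M"
    and X_indep: "indep_vars (\<lambda>_. borel) X UNIV"
    and X_ident: "\<And>i. distr M borel (X i) = distr M borel (X 0)"
    and F_cont: "continuous_on UNIV (\<lambda>y. prob {\<omega>\<in>space M. \<forall>j. X 0 \<omega> $ j \<le> y $ j})"
    and W_meas: "W \<in> measurable M (count_space UNIV)"
    and W_distr: "distr M (count_space UNIV) W = measure_pmf (multinomial_unif n)"
  shows "prob {\<omega>\<in>space M. real CARD('d) * real m / real n < boot_copula_dist n (\<lambda>i. X i \<omega>) (W \<omega>)}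
           \<le> real n / 2 ^ m"
proof -
  define E where "E = {\<omega>\<in>space M. real CARD('d) * real m / real n < boot_copula_dist n (\<lambda>i. X i \<omega>) (W \<omega>)}"
  define T where "T = (\<Union>i<n. \<Union>k\<in>{..<n} - {i}. \<Union>j. {\<omega>\<in>space M. X i \<omega> $ j = X k \<omega> $ j})"
  define B where "B = W -` {w. \<exists>i<n. m < w ! i} \<inter> space M"
  have "T \<in> null_sets M"
    unfolding T_def
    by (intro null_sets_UN' countable_finite ties_null_sets[OF X_meas X_indep X_ident F_cont]) auto
  have "B \<in> events"
    unfolding B_def using W_meas by (rule measurable_sets) simp
  have "E \<subseteq> B \<union> T"
  proof
    fix \<omega>
    assume "\<omega> \<in> E"
    show "\<omega> \<in> B \<union> T"
    proof (rule ccontr)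
      assume "\<omega> \<notin> B \<union> T"
      then have "inj_on (\<lambda>k. X k \<omega> $ j) {..<n}" for j
        using \<open>\<omega> \<in> E\<close> unfolding E_def T_def by (auto intro!: inj_onI)
      moreover have "W \<omega> ! i \<le> m" if "i < n" for i
        using \<open>\<omega> \<notin> B \<union> T\<close> \<open>\<omega> \<in> E\<close> that unfolding E_def B_def by auto
      ultimately have "boot_copula_dist n (\<lambda>i. X i \<omega>) (W \<omega>) \<le> real CARD('d) * real m / real n"
        by (rule boot_copula_dist_le)
      with \<open>\<omega> \<in> E\<close> show False
        unfolding E_def by simp
    qed
  qed
  have "E \<in> events"
    unfolding E_def using borel_measurable_boot_copula_dist[OF X_meas W_meas] by measurable
  then have "prob E \<le> prob (B \<union> T)"
    using \<open>E \<subseteq> B \<union> T\<close> \<open>B \<in> events\<close> \<open>T \<in> null_sets M\<close> by (intro finite_measure_mono) auto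
  also have "\<dots> = prob B"
    using \<open>B \<in> events\<close> \<open>T \<in> null_sets M\<close> by (rule measure_Un_null_set)
  also have "\<dots> = measure (distr M (count_space UNIV) W) {w. \<exists>i<n. m < w ! i}"
    unfolding B_def using W_meas by (intro measure_distr[symmetric]) auto
  also have "\<dots> = measure_pmf.prob (multinomial_unif n) {w. \<exists>i<n. m < w ! i}"
    by (simp add: W_distr)
  also have "\<dots> \<le> real n / 2 ^ m"
    by (rule prob_multinomial_unif_max_gt)
  finally show ?thesis
    unfolding E_def .
qed

lemma (in prob_space) boot_copula_dist_bounded_in_prob:
  fixes X :: "nat \<Rightarrow> 'a \<Rightarrow> real^'d::finite" and W :: "nat \<Rightarrow> 'a \<Rightarrow> nat list"
  assumes X_meas: "\<And>i. X i \<in> borel_measurable M"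
    and X_indep: "indep_vars (\<lambda>_. borel) X UNIV"
    and X_ident: "\<And>i. distr M borel (X i) = distr M borel (X 0)"
    and F_cont: "continuous_on UNIV (\<lambda>y. prob {\<omega>\<in>space M. \<forall>j. X 0 \<omega> $ j \<le> y $ j})"
    and W_meas: "\<And>n. W n \<in> measurable M (count_space UNIV)"
    and W_distr: "\<And>n. distr M (count_space UNIV) (W n) = measure_pmf (multinomial_unif n)"
    and "\<epsilon> > 0"
  shows "\<exists>K N. \<forall>n\<ge>N.
           {\<omega>\<in>space M. K * ln (real n) / real n < boot_copula_dist n (\<lambda>i. X i \<omega>) (W n \<omega>)} \<in> events \<and>
           prob {\<omega>\<in>space M. K * ln (real n) / real n < boot_copula_dist n (\<lambda>i. X i \<omega>) (W n \<omega>)} < \<epsilon>"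
proof -
  obtain N :: nat where "0 < N" "1 / real N < \<epsilon>"
    using ex_inverse_of_nat_less[OF \<open>\<epsilon> > 0\<close>] by (auto simp: inverse_eq_divide)
  define K where "K = 4 * real CARD('d) / ln 2"
  show ?thesis
  proof (intro exI[of _ K] exI[of _ "max 2 N"] allI impI)
    fix n
    assume "max 2 N \<le> n"
    let ?E = "\<lambda>c. {\<omega>\<in>space M. c < boot_copula_dist n (\<lambda>i. X i \<omega>) (W n \<omega>)}"
    have E_events: "?E c \<in> events" for c
      using borel_measurable_boot_copula_dist[OF X_meas W_meas] by measurable
    obtain m where m: "real m \<le> 4 * log 2 (real n)" "real n / 2 ^ m \<le> 1 / real n"
      using obtain_log_weight_bound[of n] \<open>max 2 N \<le> n\<close> by auto
    have "real CARD('d) * real m / real n \<le> K * ln (real n) / real n"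
      using m(1) unfolding K_def log_def by (intro divide_right_mono) (auto simp: field_simps)
    then have "prob (?E (K * ln (real n) / real n)) \<le> prob (?E (real CARD('d) * real m / real n))"
      using E_events by (intro finite_measure_mono) auto
    also have "\<dots> \<le> real n / 2 ^ m"
      by (rule prob_boot_copula_dist_gt[OF X_meas X_indep X_ident F_cont W_meas W_distr])
    also have "\<dots> \<le> 1 / real N"
      using m(2) \<open>0 < N\<close> \<open>max 2 N \<le> n\<close> by (simp add: frac_le order.trans)
    finally show "?E (K * ln (real n) / real n) \<in> events \<and> prob (?E (K * ln (real n) / real n)) < \<epsilon>"
      using E_events \<open>1 / real N < \<epsilon>\<close> by simp
  qed
qed

theorem proposition1:
  fixes M :: "'w measure"
    and X :: "nat \<Rightarrow> 'w \<Rightarrow> real^'d::finite"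
    and W :: "nat \<Rightarrow> 'w \<Rightarrow> nat list"
  assumes P: "prob_space M"
    and X_meas: "\<And>i. X i \<in> borel_measurable M"
    and X_indep: "prob_space.indep_vars M (\<lambda>_. borel) X UNIV"
    and X_ident: "\<And>i. distr M borel (X i) = distr M borel (X 0)"
    and F_cont: "continuous_on UNIV
                   (\<lambda>y::real^'d. measure M {\<omega>\<in>space M. \<forall>j. X 0 \<omega> $ j \<le> y $ j})"
    and W_meas: "\<And>n. W n \<in> measurable M (count_space UNIV)"
    and W_distr: "\<And>n. distr M (count_space UNIV) (W n) = measure_pmf (multinomial_unif n)"
    and W_indep: "\<And>n. prob_space.indep_set M
                     {W n -` A \<inter> space M | A. A \<in> sets (count_space UNIV)}
                     {(\<lambda>\<omega>. \<lambda>i\<in>{..<n}. X i \<omega>) -` B \<inter> space M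
                        | B. B \<in> sets (Pi\<^sub>M {..<n} (\<lambda>_. borel))}"
  shows "\<forall>\<epsilon>>0. \<exists>K N. \<forall>n\<ge>N.
           let E = {\<omega>\<in>space M.
                     (SUP u\<in>unit_cube. \<bar>boot_C n (\<lambda>i. X i \<omega>) (W n \<omega>) u
                                       - boot_Ctilde n (\<lambda>i. X i \<omega>) (W n \<omega>) u\<bar>)
                     > K * ln (real n) / real n}
           in E \<in> sets M \<and> measure M E < \<epsilon>"
proof -
  interpret prob_space M
    by (rule P)
  show ?thesis
    using boot_copula_dist_bounded_in_prob[OF X_meas X_indep X_ident F_cont W_meas W_distr]
    unfolding boot_copula_dist_def Let_def by blast
qed

end
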